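(* Consider the following model. States $\omega_t\in\{0,1\}$, $t\in\{1,2\}$, with $\Pr[\omega_1=1]=\mu_0\in(0,1)$ and $\Pr[\omega_2=\omega\mid\omega_1=\omega]=\rho\in(1/2,1)$. In each period an agent A chooses $e_t\in\{0,1\}$; if $e_t=1$ he observes $\omega_t$, if $e_t=0$ he observes $\omega_t$ with probability $\pi\in(0,1)$ and nothing otherwise; he reports $r_t\in\{\varnothing,\omega_t\}$ if he observed $\omega_t$, else $r_t=\varnothing$. A's payoff is $x-c(e_1+e_2)$, $c>0$, with $x=\hat x(r_1,r_2)$. A mechanism consists of $\sigma_1\in\{0,1\}$, $\sigma_2:\{\varnothing,0,1\}\to\{0,1\}$, $\hat x:\{\varnothing,0,1\}^2\to\{0,1\}$; A best-responds, following the recommendation and disclosing when indifferent. A mechanism is IC if at every history occurring with positive probability A optimally obeys the testing recommendation and discloses every observed result, and $\hat x(r_1,\varnothing)=0$ whenever $\sigma_2(r_1)=1$. Let $\gamma=c/(1-\pi)$ and for $r_1\in\{\varnothing,0,1\}$ and $\mu\in[0,1]$ define $$v(r_1,\mu)=-c\sigma_2(r_1)+[\sigma_2(r_1)+(1-\sigma_2(r_1))\pi][\mu\hat x(r_1,1)+(1-\mu)\hat x(r_1,0)]+(1-\sigma_2(r_1))(1-\pi)\hat x(r_1,\varnothing).$$ Let $\mathbb{E}_{\mu_0}[v(\tilde r_1,\tilde\mu_2)]=\mu_0 v(1,\rho)+(1-\mu_0)v(0,1-\rho)$ and $\mathbb{E}_{\mu_0}[v(\varnothing,\tilde\mu_2)]=\mu_0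 v(\varnothing,\rho)+(1-\mu_0)v(\varnothing,1-\rho)$. Then in any IC mechanism with $\sigma_1=0$, $$\gamma\ \ge\ \mathbb{E}_{\mu_0}[v(\tilde r_1,\tilde\mu_2)]-\mathbb{E}_{\mu_0}[v(\varnothing,\tilde\mu_2)]\ \ge\ 0.$$ *)

theory Defs
  imports Complex_Main
begin

text \<open>Reports r in {empty,0,1} are encoded as bool option: None = empty,
  Some False = 0, Some True = 1.  Binary variables (effort, recommendation,
  decision x) are encoded as bool; numeric value via of_bool.
  Parameters: pp (prob. of free observation), c (testing cost),
  rho (persistence), mu0 (prior of omega_1 = 1).\<close>

type_synonym report = "bool option"

definition xv :: "(report \<Rightarrow> report \<Rightarrow> bool) \<Rightarrow> report \<Rightarrow> report \<Rightarrow> real" where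
  "xv xh r1 r2 = of_bool (xh r1 r2)"

text \<open>Period 2: expected value of the best report, given that omega_2 is observed,
  after first-period report r1 and belief mu = Pr[omega_2 = 1].\<close>
definition obs2_val :: "(report \<Rightarrow> report \<Rightarrow> bool) \<Rightarrow> report \<Rightarrow> real \<Rightarrow> real" where
  "obs2_val xh r1 mu =
     mu * max (xv xh r1 (Some True)) (xv xh r1 None)
   + (1 - mu) * max (xv xh r1 (Some False)) (xv xh r1 None)"

definition W2 :: "real \<Rightarrow> real \<Rightarrow> (report \<Rightarrow> report \<Rightarrow> bool) \<Rightarrow> report \<Rightarrow> real \<Rightarrow> bool \<Rightarrow> real" where
  "W2 pp c xh r1 mu e =
     (if e then - c + obs2_val xh r1 mu
      else pp * obs2_val xh r1 mu + (1 - pp) * xv xh r1 None)"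

definition V2 :: "real \<Rightarrow> real \<Rightarrow> (report \<Rightarrow> report \<Rightarrow> bool) \<Rightarrow> report \<Rightarrow> real \<Rightarrow> real" where
  "V2 pp c xh r1 mu = max (W2 pp c xh r1 mu True) (W2 pp c xh r1 mu False)"

definition post1 :: "real \<Rightarrow> bool \<Rightarrow> real" where
  "post1 rho w = (if w then rho else 1 - rho)"

definition prior2 :: "real \<Rightarrow> real \<Rightarrow> real" where
  "prior2 rho mu0 = mu0 * rho + (1 - mu0) * (1 - rho)"

definition obs1_val :: "real \<Rightarrow> real \<Rightarrow> real \<Rightarrow> real \<Rightarrow> (report \<Rightarrow> report \<Rightarrow> bool) \<Rightarrow> real" where
  "obs1_val pp c rho mu0 xh =
     mu0 * max (V2 pp c xh (Some True) rho) (V2 pp c xh None rho)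
   + (1 - mu0) * max (V2 pp c xh (Some False) (1 - rho)) (V2 pp c xh None (1 - rho))"

definition W1 :: "real \<Rightarrow> real \<Rightarrow> real \<Rightarrow> real \<Rightarrow> (report \<Rightarrow> report \<Rightarrow> bool) \<Rightarrow> bool \<Rightarrow> real" where
  "W1 pp c rho mu0 xh e =
     (if e then - c + obs1_val pp c rho mu0 xh
      else pp * obs1_val pp c rho mu0 xh
           + (1 - pp) * V2 pp c xh None (prior2 rho mu0))"

text \<open>Period-2 information states (report r1, belief) of A reached with positive
  probability when A obeys and discloses in period 1.\<close>
definition reached2 :: "bool \<Rightarrow> real \<Rightarrow> real \<Rightarrow> (report \<times> real) set" where
  "reached2 s1 rho mu0 =
     {(Some w, post1 rho w) | w. True} \<union> (if s1 then {} else {(None, prior2 rho mu0)})"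

definition IC :: "real \<Rightarrow> real \<Rightarrow> real \<Rightarrow> real \<Rightarrow> bool \<Rightarrow> (report \<Rightarrow> bool)
                   \<Rightarrow> (report \<Rightarrow> report \<Rightarrow> bool) \<Rightarrow> bool" where
  "IC pp c rho mu0 s1 s2 xh \<longleftrightarrow>
     W1 pp c rho mu0 xh s1 \<ge> W1 pp c rho mu0 xh (\<not> s1)
   \<and> (\<forall>w. V2 pp c xh (Some w) (post1 rho w) \<ge> V2 pp c xh None (post1 rho w))
   \<and> (\<forall>(r1, mu) \<in> reached2 s1 rho mu0.
        W2 pp c xh r1 mu (s2 r1) \<ge> W2 pp c xh r1 mu (\<not> s2 r1)
      \<and> (\<forall>w. xv xh r1 (Some w) \<ge> xv xh r1 None))
   \<and> (\<forall>r1. s2 r1 \<longrightarrow> \<not> xh r1 None)"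

definition v :: "real \<Rightarrow> real \<Rightarrow> (report \<Rightarrow> bool) \<Rightarrow> (report \<Rightarrow> report \<Rightarrow> bool)
                  \<Rightarrow> report \<Rightarrow> real \<Rightarrow> real" where
  "v pp c s2 xh r1 mu =
     - c * of_bool (s2 r1)
   + (of_bool (s2 r1) + (1 - of_bool (s2 r1)) * pp)
     * (mu * xv xh r1 (Some True) + (1 - mu) * xv xh r1 (Some False))
   + (1 - of_bool (s2 r1)) * (1 - pp) * xv xh r1 None"

definition Ev_r1 :: "real \<Rightarrow> real \<Rightarrow> real \<Rightarrow> real \<Rightarrow> (report \<Rightarrow> bool) \<Rightarrow> (report \<Rightarrow> report \<Rightarrow> bool) \<Rightarrow> real" where
  "Ev_r1 pp c rho mu0 s2 xh =
     mu0 * v pp c s2 xh (Some True) rho + (1 - mu0) * v pp c s2 xh (Some False) (1 - rho)"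

definition Ev_empty :: "real \<Rightarrow> real \<Rightarrow> real \<Rightarrow> real \<Rightarrow> (report \<Rightarrow> bool) \<Rightarrow> (report \<Rightarrow> report \<Rightarrow> bool) \<Rightarrow> real" where
  "Ev_empty pp c rho mu0 s2 xh =
     mu0 * v pp c s2 xh None rho + (1 - mu0) * v pp c s2 xh None (1 - rho)"

end

theory Submission
  imports Defs
begin

text \<open>With \<open>\<sigma>\<^sub>1 = 0\<close>, every second-period history is reached, and there IC makes
  obeying \<open>\<sigma>\<^sub>2\<close> and disclosing optimal; so the optimal continuation value is \<open>v\<close>.
  Testing in period 1 therefore gains \<open>(1 - \<pi>)(E v(r\<^sub>1, \<mu>\<^sub>2) - v(\<emptyset>, \<mu>\<^sub>2\<^sup>0)) - c\<close>,
  where \<open>\<mu>\<^sub>2\<^sup>0\<close> is the prior belief about \<open>\<omega>\<^sub>2\<close>; as \<open>v(\<emptyset>, \<cdot>)\<close> is affine in the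
  belief, the subtracted term is \<open>E v(\<emptyset>, \<mu>\<^sub>2)\<close>, and obedience to \<open>\<sigma>\<^sub>1 = 0\<close> gives the upper
  bound. For the lower bound, \<open>v(\<emptyset>, \<mu>)\<close> is the value of one particular continuation,
  hence at most the optimal value after \<open>\<emptyset>\<close>, which disclosure in period 1 bounds by the
  optimal value after reporting \<open>\<omega>\<^sub>1\<close>, namely \<open>v(\<omega>\<^sub>1, \<mu>)\<close>.\<close>

lemma obs2_val_ge_disclose:
  assumes "0 \<le> mu" "mu \<le> 1"
  shows "mu * xv xh r (Some True) + (1 - mu) * xv xh r (Some False) \<le> obs2_val xh r mu"
proof -
  have "mu * xv xh r (Some True) \<le> mu * max (xv xh r (Some True)) (xv xh r None)"
    using assms by (intro mult_left_mono) auto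
  moreover have "(1 - mu) * xv xh r (Some False) \<le> (1 - mu) * max (xv xh r (Some False)) (xv xh r None)"
    using assms by (intro mult_left_mono) auto
  ultimately show ?thesis unfolding obs2_val_def by linarith
qed

lemma obs2_val_eq_disclose:
  assumes "\<forall>w. xv xh r None \<le> xv xh r (Some w)"
  shows "obs2_val xh r mu = mu * xv xh r (Some True) + (1 - mu) * xv xh r (Some False)"
  using assms unfolding obs2_val_def by (simp add: max_absorb1)

lemma v_le_W2:
  assumes "0 \<le> mu" "mu \<le> 1" "0 \<le> pp" "pp \<le> 1"
  shows "v pp c s2 xh r mu \<le> W2 pp c xh r mu (s2 r)"
proof -
  have disclose: "mu * xv xh r (Some True) + (1 - mu) * xv xh r (Some False) \<le> obs2_val xh r mu"
    using obs2_val_ge_disclose assms by blast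
  then have "pp * (mu * xv xh r (Some True) + (1 - mu) * xv xh r (Some False))
      \<le> pp * obs2_val xh r mu"
    using assms by (intro mult_left_mono) auto
  with disclose show ?thesis unfolding W2_def v_def by (cases "s2 r") auto
qed

lemma v_le_V2:
  assumes "0 \<le> mu" "mu \<le> 1" "0 \<le> pp" "pp \<le> 1"
  shows "v pp c s2 xh r mu \<le> V2 pp c xh r mu"
  using v_le_W2[OF assms, of c s2 xh r] unfolding V2_def by (cases "s2 r") auto

lemma V2_eq_v_if_obey_disclose:
  assumes "\<forall>w. xv xh r None \<le> xv xh r (Some w)"
    and "W2 pp c xh r mu (\<not> s2 r) \<le> W2 pp c xh r mu (s2 r)"
  shows "V2 pp c xh r mu = v pp c s2 xh r mu"
proof -
  have "V2 pp c xh r mu = W2 pp c xh r mu (s2 r)"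
    using assms(2) unfolding V2_def by (cases "s2 r") (auto simp: max_def)
  also have "\<dots> = v pp c s2 xh r mu"
    using obs2_val_eq_disclose[OF assms(1)] unfolding W2_def v_def by (cases "s2 r") auto
  finally show ?thesis .
qed

lemma v_convex_combination:
  "mu0 * v pp c s2 xh r a + (1 - mu0) * v pp c s2 xh r b
   = v pp c s2 xh r (mu0 * a + (1 - mu0) * b)"
  unfolding v_def by (simp add: algebra_simps)

lemma W1_test_minus_no_test:
  "W1 pp c rho mu0 xh True - W1 pp c rho mu0 xh False
   = (1 - pp) * (obs1_val pp c rho mu0 xh - V2 pp c xh None (prior2 rho mu0)) - c"
  unfolding W1_def by (simp add: algebra_simps)

lemma Some_post1_in_reached2: "(Some w, post1 rho w) \<in> reached2 s1 rho mu0"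
  unfolding reached2_def by blast

lemma None_prior2_in_reached2: "(None, prior2 rho mu0) \<in> reached2 False rho mu0"
  unfolding reached2_def by simp

lemma IC_V2_eq_v:
  assumes "IC pp c rho mu0 s1 s2 xh" "(r, mu) \<in> reached2 s1 rho mu0"
  shows "V2 pp c xh r mu = v pp c s2 xh r mu"
  using assms unfolding IC_def by (intro V2_eq_v_if_obey_disclose) auto

lemma IC_V2_None_le_v_Some:
  assumes "IC pp c rho mu0 s1 s2 xh"
  shows "V2 pp c xh None (post1 rho w) \<le> v pp c s2 xh (Some w) (post1 rho w)"
  using assms IC_V2_eq_v[OF assms Some_post1_in_reached2] unfolding IC_def by simp

lemma IC_obs1_val_eq_Ev_r1:
  assumes "IC pp c rho mu0 s1 s2 xh"
  shows "obs1_val pp c rho mu0 xh = Ev_r1 pp c rho mu0 s2 xh"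
  using IC_V2_None_le_v_Some[OF assms, of True] IC_V2_None_le_v_Some[OF assms, of False]
    IC_V2_eq_v[OF assms Some_post1_in_reached2, of True]
    IC_V2_eq_v[OF assms Some_post1_in_reached2, of False]
  unfolding obs1_val_def Ev_r1_def post1_def by (simp add: max_absorb1)

lemma IC_Ev_empty_eq_V2_prior2:
  assumes "IC pp c rho mu0 False s2 xh"
  shows "Ev_empty pp c rho mu0 s2 xh = V2 pp c xh None (prior2 rho mu0)"
  unfolding Ev_empty_def v_convex_combination IC_V2_eq_v[OF assms None_prior2_in_reached2]
  by (simp add: prior2_def)

lemma IC_Ev_empty_le_Ev_r1:
  assumes "IC pp c rho mu0 s1 s2 xh"
    and "0 \<le> mu0" "mu0 \<le> 1" "0 \<le> rho" "rho \<le> 1" "0 \<le> pp" "pp \<le> 1"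
  shows "Ev_empty pp c rho mu0 s2 xh \<le> Ev_r1 pp c rho mu0 s2 xh"
proof -
  have v_None_le_v_Some: "v pp c s2 xh None (post1 rho w) \<le> v pp c s2 xh (Some w) (post1 rho w)"
    for w
  proof -
    have "v pp c s2 xh None (post1 rho w) \<le> V2 pp c xh None (post1 rho w)"
      using assms by (intro v_le_V2) (auto simp: post1_def)
    also have "\<dots> \<le> v pp c s2 xh (Some w) (post1 rho w)"
      using IC_V2_None_le_v_Some[OF assms(1)] .
    finally show ?thesis .
  qed
  have "mu0 * v pp c s2 xh None rho \<le> mu0 * v pp c s2 xh (Some True) rho"
    using v_None_le_v_Some[of True] assms by (intro mult_left_mono) (auto simp: post1_def)
  moreover have "(1 - mu0) * v pp c s2 xh None (1 - rho)
      \<le> (1 - mu0) * v pp c s2 xh (Some False) (1 - rho)"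
    using v_None_le_v_Some[of False] assms by (intro mult_left_mono) (auto simp: post1_def)
  ultimately show ?thesis unfolding Ev_empty_def Ev_r1_def by linarith
qed

theorem lemma7:
  fixes pp c rho mu0 :: real and s1 :: bool and s2 :: "report \<Rightarrow> bool"
    and xh :: "report \<Rightarrow> report \<Rightarrow> bool"
  assumes "0 < mu0" "mu0 < 1" "1/2 < rho" "rho < 1" "0 < pp" "pp < 1" "0 < c"
    and "IC pp c rho mu0 s1 s2 xh"
    and "s1 = False"
  shows "c / (1 - pp) \<ge> Ev_r1 pp c rho mu0 s2 xh - Ev_empty pp c rho mu0 s2 xh
       \<and> Ev_r1 pp c rho mu0 s2 xh - Ev_empty pp c rho mu0 s2 xh \<ge> 0"
proof -
  have ic: "IC pp c rho mu0 False s2 xh"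
    using assms(8,9) by simp
  have "W1 pp c rho mu0 xh True \<le> W1 pp c rho mu0 xh False"
    using ic unfolding IC_def by simp
  then have "(1 - pp) * (Ev_r1 pp c rho mu0 s2 xh - Ev_empty pp c rho mu0 s2 xh) \<le> c"
    using W1_test_minus_no_test[of pp c rho mu0 xh]
    unfolding IC_obs1_val_eq_Ev_r1[OF ic] IC_Ev_empty_eq_V2_prior2[OF ic] by linarith
  then have "Ev_r1 pp c rho mu0 s2 xh - Ev_empty pp c rho mu0 s2 xh \<le> c / (1 - pp)"
    using assms(6) by (simp add: pos_le_divide_eq mult.commute)
  moreover have "Ev_empty pp c rho mu0 s2 xh \<le> Ev_r1 pp c rho mu0 s2 xh"
    using IC_Ev_empty_le_Ev_r1[OF ic] assms(1-6) by simp
  ultimately show ?thesis by simp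
qed

end
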